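(* Consider the integer quadratic program: minimize $x^TQx$ subject to $Ax\le b$, $Cx=d$, $x\in\mathbb{Z}^n$. If this program has an optimal solution, then for any $x_0$ with $Cx_0=d$ there exists an optimal solution $x^\star$ such that at least one of the following holds: (1) there exist a row $a_j^T$ of $A$ and an integer $b_j'\in\{b_j-\alpha\cdot n\cdot\Delta^2,\ldots,b_j\}$ such that $a_j^Tx^\star=b_j'$ and $a_j^T$ is linearly independent from the rows of $C$; (2) there exists $y_i\in Y$ such that $y_i^TQ$ is linearly independent of the rows of $C$ and $2y_i^TQx^\star=z$ for some $z\in\{-n^2\Delta^4\alpha,\ldots,n^2\Delta^4\alpha\}$; (3) $|x^\star-x_0|_1\le\Delta^2\cdot n$.
   Context: Setting: $Q$ is an $n\times n$ integer symmetric matrix, $A$ an $m\times n$ integer matrix with rows $a_1^T,\dots,a_m^T$, $b\in\mathbb{Z}^m$ with entries $b_j$, $C$ an integer matrix with $n$ columns and linearly independent rows, and $d$ an integer vector. $\alpha$ is the maximum absolute value of an entry of $Q$ and $A$, and $\Delta$ is the maximum absolute value of the determinant of a square submatrix of $C$. $y_1,\dots,y_r$ is a basis of the nullspace of $C$ consisting of integer vectors with $|y_i|_\infty\le\Delta^2$, and $Y$ is the set of these vectors. A feasible solution is an $x\in\mathbb{Z}^n$ with $Ax\le b$ and $Cx=d$; an optimal solution is a feasible solution minimizing $x^TQx$. *)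

theory Defs
  imports Complex_Main "HOL-Combinatorics.Permutations"
begin

text \<open>Vectors in Z^n are functions nat => int (only indices < n matter);
  an m x n matrix is a function nat => nat => int (only entries i<m, j<n matter).\<close>

definition mv :: "nat \<Rightarrow> (nat \<Rightarrow> nat \<Rightarrow> int) \<Rightarrow> (nat \<Rightarrow> int) \<Rightarrow> nat \<Rightarrow> int" where
  "mv n M x i = (\<Sum>l<n. M i l * x l)"

definition quad :: "nat \<Rightarrow> (nat \<Rightarrow> nat \<Rightarrow> int) \<Rightarrow> (nat \<Rightarrow> int) \<Rightarrow> int" where
  "quad n Q x = (\<Sum>i<n. \<Sum>j<n. x i * Q i j * x j)"

definition det_sq :: "nat \<Rightarrow> (nat \<Rightarrow> nat \<Rightarrow> int) \<Rightarrow> int" where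
  "det_sq s M = (\<Sum>p | p permutes {..<s}. sign p * (\<Prod>i<s. M i (p i)))"

definition Delta :: "nat \<Rightarrow> nat \<Rightarrow> (nat \<Rightarrow> nat \<Rightarrow> int) \<Rightarrow> int" where
  "Delta k n C = Max {\<bar>det_sq s (\<lambda>i j. C (I i) (J j))\<bar> | s I J.
      strict_mono_on {..<s} I \<and> I ` {..<s} \<subseteq> {..<k} \<and>
      strict_mono_on {..<s} J \<and> J ` {..<s} \<subseteq> {..<n}}"

definition alpha :: "nat \<Rightarrow> nat \<Rightarrow> (nat \<Rightarrow> nat \<Rightarrow> int) \<Rightarrow> (nat \<Rightarrow> nat \<Rightarrow> int) \<Rightarrow> int" where
  "alpha m n Q A = Max (insert 0 ({\<bar>Q i j\<bar> | i j. i < n \<and> j < n} \<union> {\<bar>A i j\<bar> | i j. i < m \<and> j < n}))"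

definition lin_indep_rows :: "nat \<Rightarrow> nat \<Rightarrow> (nat \<Rightarrow> nat \<Rightarrow> int) \<Rightarrow> bool" where
  "lin_indep_rows k n C \<longleftrightarrow>
     (\<forall>c :: nat \<Rightarrow> real. (\<forall>l<n. (\<Sum>i<k. c i * of_int (C i l)) = 0) \<longrightarrow> (\<forall>i<k. c i = 0))"

definition in_row_span :: "nat \<Rightarrow> nat \<Rightarrow> (nat \<Rightarrow> nat \<Rightarrow> int) \<Rightarrow> (nat \<Rightarrow> real) \<Rightarrow> bool" where
  "in_row_span k n C v \<longleftrightarrow> (\<exists>c :: nat \<Rightarrow> real. \<forall>l<n. v l = (\<Sum>i<k. c i * of_int (C i l)))"

definition null_basis :: "nat \<Rightarrow> nat \<Rightarrow> (nat \<Rightarrow> nat \<Rightarrow> int) \<Rightarrow> nat \<Rightarrow> (nat \<Rightarrow> nat \<Rightarrow> int) \<Rightarrow> bool" where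
  "null_basis k n C r y \<longleftrightarrow>
     (\<forall>i<r. \<forall>j<k. (\<Sum>l<n. C j l * y i l) = 0) \<and>
     (\<forall>c :: nat \<Rightarrow> real. (\<forall>l<n. (\<Sum>i<r. c i * of_int (y i l)) = 0) \<longrightarrow> (\<forall>i<r. c i = 0)) \<and>
     (\<forall>v :: nat \<Rightarrow> real. (\<forall>j<k. (\<Sum>l<n. of_int (C j l) * v l) = 0) \<longrightarrow>
        (\<exists>c :: nat \<Rightarrow> real. \<forall>l<n. v l = (\<Sum>i<r. c i * of_int (y i l))))"

definition feasible :: "nat \<Rightarrow> nat \<Rightarrow> nat \<Rightarrow> (nat \<Rightarrow> nat \<Rightarrow> int) \<Rightarrow> (nat \<Rightarrow> int)
    \<Rightarrow> (nat \<Rightarrow> nat \<Rightarrow> int) \<Rightarrow> (nat \<Rightarrow> int) \<Rightarrow> (nat \<Rightarrow> int) \<Rightarrow> bool" where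
  "feasible m k n A b C d x \<longleftrightarrow> (\<forall>j<m. mv n A x j \<le> b j) \<and> (\<forall>j<k. mv n C x j = d j)"

definition optimal :: "nat \<Rightarrow> nat \<Rightarrow> nat \<Rightarrow> (nat \<Rightarrow> nat \<Rightarrow> int) \<Rightarrow> (nat \<Rightarrow> nat \<Rightarrow> int)
    \<Rightarrow> (nat \<Rightarrow> int) \<Rightarrow> (nat \<Rightarrow> nat \<Rightarrow> int) \<Rightarrow> (nat \<Rightarrow> int) \<Rightarrow> (nat \<Rightarrow> int) \<Rightarrow> bool" where
  "optimal m k n Q A b C d x \<longleftrightarrow> feasible m k n A b C d x \<and>
     (\<forall>x'. feasible m k n A b C d x' \<longrightarrow> quad n Q x \<le> quad n Q x')"

end

theory Submission
  imports Defs
begin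

text \<open>Start from any optimal solution \<open>x\<close>. If it satisfies neither (1) nor (2), every
  inequality not implied by \<open>Cx = d\<close> has slack more than \<open>\<alpha>n\<Delta>\<^sup>2\<close> at \<open>x\<close>, so \<open>x \<plusminus> y\<^sub>i\<close> are
  feasible; optimality bounds \<open>|2y\<^sub>i\<^sup>TQx|\<close> by \<open>y\<^sub>i\<^sup>TQy\<^sub>i \<le> n\<^sup>2\<Delta>\<^sup>4\<alpha>\<close>, and the failure of (2) puts
  every \<open>y\<^sub>i\<^sup>TQ\<close> in the row span of \<open>C\<close>. Then the form \<open>Q\<close> vanishes on the nullspace of \<open>C\<close> and
  \<open>y\<^sub>i\<^sup>TQx = 0\<close>, so the objective is constant on the feasible set: every feasible point is
  optimal. If \<open>x\<^sub>0\<close> is feasible it satisfies (3). Otherwise some \<open>y\<^sub>i\<close> changes a violated row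
  of \<open>A\<close>; walking from \<open>x\<close> along \<open>\<plusminus>y\<^sub>i\<close>, the last feasible point has a non-implied row of \<open>A\<close>
  within \<open>\<alpha>n\<Delta>\<^sup>2\<close> of its bound.\<close>

definition bilin :: "nat \<Rightarrow> (nat \<Rightarrow> nat \<Rightarrow> int) \<Rightarrow> (nat \<Rightarrow> int) \<Rightarrow> (nat \<Rightarrow> int) \<Rightarrow> int" where
  "bilin n Q v w = (\<Sum>t<n. \<Sum>l<n. v t * Q t l * w l)"

lemma mv_add: "mv n M (\<lambda>l. x l + v l) j = mv n M x j + mv n M v j"
  by (simp add: mv_def algebra_simps sum.distrib)

lemma mv_diff: "mv n M (\<lambda>l. x l - v l) j = mv n M x j - mv n M v j"
  by (simp add: mv_def algebra_simps sum_subtractf)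

lemma mv_scale: "mv n M (\<lambda>l. c * v l) j = c * mv n M v j"
  by (simp add: mv_def algebra_simps sum_distrib_left)

lemma quad_eq_bilin: "quad n Q v = bilin n Q v v"
  by (simp add: quad_def bilin_def)

lemma bilin_eq_sum_left: "bilin n Q v w = (\<Sum>l<n. (\<Sum>t<n. v t * Q t l) * w l)"
  unfolding bilin_def by (subst sum.swap) (simp add: sum_distrib_right)

lemma bilin_eq_sum_right: "bilin n Q v w = (\<Sum>t<n. (\<Sum>l<n. Q t l * w l) * v t)"
  unfolding bilin_def by (simp add: sum_distrib_left sum_distrib_right algebra_simps)

lemma bilin_commute:
  assumes "\<forall>i<n. \<forall>j<n. Q i j = Q j i"
  shows "bilin n Q v w = bilin n Q w v"
proof -
  have "bilin n Q v w = (\<Sum>l<n. \<Sum>t<n. v t * Q t l * w l)"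
    unfolding bilin_def by (rule sum.swap)
  also have "\<dots> = bilin n Q w v"
    unfolding bilin_def using assms by (intro sum.cong refl) (simp add: algebra_simps)
  finally show ?thesis .
qed

lemma quad_add:
  assumes "\<forall>i<n. \<forall>j<n. Q i j = Q j i"
  shows "quad n Q (\<lambda>l. x l + v l) = quad n Q x + 2 * bilin n Q x v + quad n Q v"
proof -
  have "quad n Q (\<lambda>l. x l + v l) = quad n Q x + bilin n Q x v + bilin n Q v x + quad n Q v"
    unfolding quad_def bilin_def by (simp add: algebra_simps sum.distrib)
  then show ?thesis using bilin_commute[OF assms, of v x] by simp
qed

lemma quad_diff:
  assumes "\<forall>i<n. \<forall>j<n. Q i j = Q j i"
  shows "quad n Q (\<lambda>l. x l - v l) = quad n Q x - 2 * bilin n Q x v + quad n Q v"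
proof -
  have "quad n Q (\<lambda>l. x l - v l) = quad n Q x - bilin n Q x v - bilin n Q v x + quad n Q v"
    unfolding quad_def bilin_def by (simp add: algebra_simps sum.distrib sum_subtractf)
  then show ?thesis using bilin_commute[OF assms, of v x] by simp
qed

lemma row_span_orthogonal:
  assumes "in_row_span k n C (\<lambda>l. of_int (f l))" "\<forall>j<k. mv n C v j = 0"
  shows "(\<Sum>l<n. f l * v l) = 0"
proof -
  obtain c where c: "\<forall>l<n. real_of_int (f l) = (\<Sum>i<k. c i * of_int (C i l))"
    using assms(1) unfolding in_row_span_def by blast
  have "real_of_int (\<Sum>l<n. f l * v l) = (\<Sum>l<n. (\<Sum>i<k. c i * of_int (C i l)) * of_int (v l))"
    using c by (simp add: of_int_sum)
  also have "\<dots> = (\<Sum>i<k. c i * of_int (mv n C v i))"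
    by (simp add: mv_def sum_distrib_left sum_distrib_right mult.assoc of_int_sum
        sum.swap[of _ "{..<k}"])
  also have "\<dots> = 0" using assms(2) by simp
  finally show ?thesis by (metis of_int_eq_0_iff)
qed

lemma null_basis_kernel: "null_basis k n C r y \<Longrightarrow> i < r \<Longrightarrow> \<forall>j<k. mv n C (y i) j = 0"
  unfolding null_basis_def mv_def by blast

lemma null_basis_orthogonal:
  assumes basis: "null_basis k n C r y" and "\<forall>j<k. mv n C v j = 0"
    and "\<forall>i<r. (\<Sum>l<n. f l * y i l) = 0"
  shows "(\<Sum>l<n. f l * v l) = 0"
proof -
  have "(\<Sum>l<n. real_of_int (C j l) * real_of_int (v l)) = real_of_int (mv n C v j)" for j
    by (simp add: mv_def of_int_sum)
  then have "\<forall>j<k. (\<Sum>l<n. real_of_int (C j l) * real_of_int (v l)) = 0"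
    using assms(2) by simp
  then obtain c where c: "\<forall>l<n. real_of_int (v l) = (\<Sum>i<r. c i * of_int (y i l))"
    using basis[unfolded null_basis_def, THEN conjunct2, THEN conjunct2, rule_format, of "\<lambda>l. real_of_int (v l)"] by blast
  have "real_of_int (\<Sum>l<n. f l * v l) = (\<Sum>l<n. of_int (f l) * (\<Sum>i<r. c i * of_int (y i l)))"
    using c by (simp add: of_int_sum)
  also have "\<dots> = (\<Sum>i<r. c i * of_int (\<Sum>l<n. f l * y i l))"
    by (simp add: sum_distrib_left sum_distrib_right mult.assoc mult.left_commute of_int_sum
        sum.swap[of _ "{..<r}"])
  also have "\<dots> = 0" using assms(3) by simp
  finally show ?thesis by (metis of_int_eq_0_iff)
qed

lemma bilin_eq_0_of_row_span:
  assumes "in_row_span k n C (\<lambda>l. of_int (\<Sum>t<n. v t * Q t l))" "\<forall>j<k. mv n C w j = 0"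
  shows "bilin n Q v w = 0"
  unfolding bilin_eq_sum_left using row_span_orthogonal[OF assms] .

lemma bilin_eq_0_of_null_basis:
  assumes "null_basis k n C r y" "\<forall>j<k. mv n C v j = 0" "\<forall>i<r. bilin n Q (y i) w = 0"
  shows "bilin n Q v w = 0"
  unfolding bilin_eq_sum_right
  by (rule null_basis_orthogonal[OF assms(1,2)]) (use assms(3) in \<open>simp add: bilin_eq_sum_right\<close>)

lemma alpha_nonneg: "0 \<le> alpha m n Q A"
  unfolding alpha_def by (rule Max_ge) (auto intro: finite_image_set2)

lemma abs_Q_le_alpha: "i < n \<Longrightarrow> j < n \<Longrightarrow> \<bar>Q i j\<bar> \<le> alpha m n Q A"
  unfolding alpha_def by (rule Max_ge) (auto intro: finite_image_set2)

lemma abs_A_le_alpha: "i < m \<Longrightarrow> j < n \<Longrightarrow> \<bar>A i j\<bar> \<le> alpha m n Q A"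
  unfolding alpha_def by (rule Max_ge) (auto intro: finite_image_set2)

lemma abs_mv_le_alpha:
  assumes "j < m" "\<forall>l<n. \<bar>v l\<bar> \<le> D"
  shows "\<bar>mv n A v j\<bar> \<le> alpha m n Q A * int n * D"
proof -
  have "\<bar>mv n A v j\<bar> \<le> (\<Sum>l<n. \<bar>A j l * v l\<bar>)" unfolding mv_def by (rule sum_abs)
  also have "\<dots> \<le> (\<Sum>l<n. alpha m n Q A * D)"
    by (rule sum_mono)
      (use assms abs_A_le_alpha alpha_nonneg in \<open>auto simp: abs_mult intro!: mult_mono\<close>)
  finally show ?thesis by (simp add: algebra_simps)
qed

lemma abs_quad_le_alpha:
  assumes "\<forall>l<n. \<bar>v l\<bar> \<le> D"
  shows "\<bar>quad n Q v\<bar> \<le> int n ^ 2 * D ^ 2 * alpha m n Q A"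
proof -
  have "\<bar>quad n Q v\<bar> \<le> (\<Sum>i<n. \<Sum>j<n. \<bar>v i * Q i j * v j\<bar>)"
    unfolding quad_def by (rule order_trans[OF sum_abs sum_mono[OF sum_abs]])
  also have "\<dots> \<le> (\<Sum>i<n. \<Sum>j<n. D * alpha m n Q A * D)"
    by (intro sum_mono)
      (use assms abs_Q_le_alpha alpha_nonneg in \<open>auto simp: abs_mult intro!: mult_mono\<close>)
  finally show ?thesis by (simp add: algebra_simps power2_eq_square)
qed

lemma feasible_add_diff_kernel_vector:
  assumes x: "feasible m k n A b C d x" and Cv: "\<forall>j<k. mv n C v j = 0"
    and slack: "\<And>j. j < m \<Longrightarrow> \<not> in_row_span k n C (\<lambda>l. of_int (A j l)) \<Longrightarrow>
      mv n A x j + \<bar>mv n A v j\<bar> \<le> b j"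
  shows "feasible m k n A b C d (\<lambda>l. x l + v l)" "feasible m k n A b C d (\<lambda>l. x l - v l)"
proof -
  have "mv n A x j + mv n A v j \<le> b j \<and> mv n A x j - mv n A v j \<le> b j" if "j < m" for j
  proof (cases "in_row_span k n C (\<lambda>l. of_int (A j l))")
    case True
    then have "mv n A v j = 0" unfolding mv_def by (rule row_span_orthogonal[OF _ Cv])
    then show ?thesis using x that unfolding feasible_def by simp
  next
    case False
    then show ?thesis using slack[OF that] by linarith
  qed
  then show "feasible m k n A b C d (\<lambda>l. x l + v l)" "feasible m k n A b C d (\<lambda>l. x l - v l)"
    using x Cv unfolding feasible_def mv_add mv_diff by auto
qed

lemma optimal_abs_bilin_le_quad:
  assumes Q_sym: "\<forall>i<n. \<forall>j<n. Q i j = Q j i"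
    and opt: "optimal m k n Q A b C d x"
    and "feasible m k n A b C d (\<lambda>l. x l + v l) \<and> feasible m k n A b C d (\<lambda>l. x l - v l)"
  shows "\<bar>2 * bilin n Q v x\<bar> \<le> quad n Q v"
proof -
  have "quad n Q x \<le> quad n Q (\<lambda>l. x l + v l)" "quad n Q x \<le> quad n Q (\<lambda>l. x l - v l)"
    using opt assms(3) unfolding optimal_def by auto
  then show ?thesis
    unfolding quad_add[OF Q_sym] quad_diff[OF Q_sym] bilin_commute[OF Q_sym, of v] by linarith
qed

lemma feasible_imp_optimal_if_flat:
  assumes Q_sym: "\<forall>i<n. \<forall>j<n. Q i j = Q j i"
    and basis: "null_basis k n C r y"
    and flat: "\<forall>i<r. in_row_span k n C (\<lambda>l. of_int (\<Sum>t<n. y i t * Q t l))"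
    and opt: "optimal m k n Q A b C d x1"
    and moves: "\<And>i. i < r \<Longrightarrow>
      feasible m k n A b C d (\<lambda>l. x1 l + y i l) \<and> feasible m k n A b C d (\<lambda>l. x1 l - y i l)"
    and x: "feasible m k n A b C d x"
  shows "optimal m k n Q A b C d x"
proof -
  have quad_y: "quad n Q (y i) = 0" if "i < r" for i
    using bilin_eq_0_of_row_span[OF flat[rule_format, OF that] null_basis_kernel[OF basis that]]
    by (simp add: quad_eq_bilin)
  have bilin_y_x1: "bilin n Q (y i) x1 = 0" if "i < r" for i
    using optimal_abs_bilin_le_quad[OF Q_sym opt moves[OF that]] quad_y[OF that] by simp
  define v where "v = (\<lambda>l. x l - x1 l)"
  have Cv: "\<forall>j<k. mv n C v j = 0"
    using x opt unfolding optimal_def feasible_def v_def mv_diff by simp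
  have "bilin n Q v x1 = 0"
    by (rule bilin_eq_0_of_null_basis[OF basis Cv]) (simp add: bilin_y_x1)
  moreover have "bilin n Q v v = 0"
    using bilin_eq_0_of_null_basis[OF basis Cv] bilin_eq_0_of_row_span[OF _ Cv] flat by blast
  moreover have "x = (\<lambda>l. x1 l + v l)" unfolding v_def by simp
  ultimately have "quad n Q x = quad n Q x1"
    using quad_add[OF Q_sym, of x1 v] bilin_commute[OF Q_sym, of x1 v] quad_eq_bilin[of n Q v]
    by simp
  then show ?thesis using x opt unfolding optimal_def by simp
qed

lemma exists_last_before_failure:
  fixes P :: "nat \<Rightarrow> bool"
  shows "P 0 \<Longrightarrow> \<not> P t \<Longrightarrow> \<exists>s. P s \<and> \<not> P (Suc s)"
  by (induction t) auto

lemma ray_leaves_feasible_region: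
  assumes x: "feasible m k n A b C d x" and Cw: "\<forall>j<k. mv n C w j = 0"
    and "j < m" "0 < mv n A w j"
  obtains s j' where "feasible m k n A b C d (\<lambda>l. x l + int s * w l)" "j' < m"
    "b j' - mv n A w j' < mv n A (\<lambda>l. x l + int s * w l) j'"
    "\<not> in_row_span k n C (\<lambda>l. of_int (A j' l))"
proof -
  define P where "P s = (\<lambda>l. x l + int s * w l)" for s
  have PA: "mv n A (P s) j' = mv n A x j' + int s * mv n A w j'" for s j'
    unfolding P_def mv_add mv_scale ..
  have feasible_P: "feasible m k n A b C d (P s) \<longleftrightarrow> (\<forall>j<m. mv n A (P s) j \<le> b j)" for s
    using x Cw unfolding feasible_def P_def mv_add mv_scale by simp
  let ?t = "nat (b j - mv n A x j) + 1"
  have "int ?t \<le> int ?t * mv n A w j" using \<open>0 < mv n A w j\<close> by simp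
  then have "b j < mv n A (P ?t) j" unfolding PA by linarith
  then have "\<not> feasible m k n A b C d (P ?t)" using feasible_P \<open>j < m\<close> by force
  moreover have "feasible m k n A b C d (P 0)" using x unfolding P_def by simp
  ultimately obtain s where s: "feasible m k n A b C d (P s)" "\<not> feasible m k n A b C d (P (Suc s))"
    using exists_last_before_failure[of "\<lambda>s. feasible m k n A b C d (P s)"] by blast
  then obtain j' where j': "j' < m" "b j' < mv n A (P s) j' + mv n A w j'"
    using PA[of "Suc s"] PA[of s] feasible_P by (force simp: algebra_simps)
  moreover have "\<not> in_row_span k n C (\<lambda>l. of_int (A j' l))"
  proof
    assume "in_row_span k n C (\<lambda>l. of_int (A j' l))"
    then have "mv n A w j' = 0" using row_span_orthogonal Cw unfolding mv_def by blast
    then show False using j' s(1) feasible_P by force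
  qed
  ultimately show ?thesis using that s(1) unfolding P_def by (simp add: algebra_simps)
qed

lemma feasible_point_near_facet:
  assumes basis: "null_basis k n C r y"
    and A_y: "\<And>i j. i < r \<Longrightarrow> j < m \<Longrightarrow> \<bar>mv n A (y i) j\<bar> \<le> B"
    and x1: "feasible m k n A b C d x1"
    and x0: "\<forall>j<k. mv n C x0 j = d j" "\<not> feasible m k n A b C d x0"
  obtains xs j where "feasible m k n A b C d xs" "j < m"
    "b j - B \<le> mv n A xs j" "mv n A xs j \<le> b j" "\<not> in_row_span k n C (\<lambda>l. of_int (A j l))"
proof -
  obtain j where j: "j < m" "b j < mv n A x0 j"
    using x0 unfolding feasible_def by force
  have "\<exists>i<r. mv n A (y i) j \<noteq> 0"
  proof (rule ccontr)
    assume "\<not> ?thesis"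
    then have "\<forall>i<r. (\<Sum>l<n. A j l * y i l) = 0" unfolding mv_def by simp
    moreover have "\<forall>j<k. mv n C (\<lambda>l. x0 l - x1 l) j = 0"
      using x0 x1 unfolding feasible_def mv_diff by simp
    ultimately have "(\<Sum>l<n. A j l * (x0 l - x1 l)) = 0"
      by (rule null_basis_orthogonal[OF basis, rotated])
    then have "mv n A x0 j = mv n A x1 j"
      using mv_diff[of n A x0 x1 j] unfolding mv_def by simp
    then show False using j x1 unfolding feasible_def by force
  qed
  then obtain i where i: "i < r" "mv n A (y i) j \<noteq> 0" by blast
  define w where "w = (\<lambda>l. sgn (mv n A (y i) j) * y i l)"
  have Cw: "\<forall>j<k. mv n C w j = 0"
    using null_basis_kernel[OF basis i(1)] unfolding w_def mv_scale by simp
  have Aw: "\<bar>mv n A w j'\<bar> = \<bar>mv n A (y i) j'\<bar>" for j'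
    using i(2) unfolding w_def mv_scale by (simp add: abs_mult abs_sgn_eq)
  have "0 < mv n A w j"
    using i(2) unfolding w_def mv_scale by (simp add: mult.commute abs_sgn[symmetric])
  then obtain s j' where s: "feasible m k n A b C d (\<lambda>l. x1 l + int s * w l)" "j' < m"
      "b j' - mv n A w j' < mv n A (\<lambda>l. x1 l + int s * w l) j'"
      "\<not> in_row_span k n C (\<lambda>l. of_int (A j' l))"
    using ray_leaves_feasible_region[OF x1 Cw j(1)] by blast
  moreover have "mv n A w j' \<le> B" using A_y[OF i(1) s(2)] Aw[of j'] by linarith
  moreover have "mv n A (\<lambda>l. x1 l + int s * w l) j' \<le> b j'"
    using s(1,2) unfolding feasible_def by blast
  ultimately show ?thesis using that[OF s(1,2)] by simp
qed

theorem lemma5: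
  fixes m k n r :: nat
    and Q A C y :: "nat \<Rightarrow> nat \<Rightarrow> int"
    and b d x0 :: "nat \<Rightarrow> int"
  assumes Q_sym: "\<forall>i<n. \<forall>j<n. Q i j = Q j i"
    and C_indep: "lin_indep_rows k n C"
    and Y_basis: "null_basis k n C r y"
    and Y_bound: "\<forall>i<r. \<forall>l<n. \<bar>y i l\<bar> \<le> (Delta k n C)\<^sup>2"
    and has_opt: "\<exists>x. optimal m k n Q A b C d x"
    and x0: "\<forall>j<k. mv n C x0 j = d j"
  shows "\<exists>xs. optimal m k n Q A b C d xs \<and>
    ((\<exists>j<m. \<exists>b'. b j - alpha m n Q A * int n * (Delta k n C)\<^sup>2 \<le> b' \<and> b' \<le> b j \<and>
              mv n A xs j = b' \<and> \<not> in_row_span k n C (\<lambda>l. of_int (A j l))) \<or>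
     (\<exists>i<r. \<not> in_row_span k n C (\<lambda>l. of_int (\<Sum>t<n. y i t * Q t l)) \<and>
              (\<exists>z. - (int n ^ 2 * (Delta k n C) ^ 4 * alpha m n Q A) \<le> z \<and>
                   z \<le> int n ^ 2 * (Delta k n C) ^ 4 * alpha m n Q A \<and>
                   2 * (\<Sum>t<n. \<Sum>l<n. y i t * Q t l * xs l) = z)) \<or>
     (\<Sum>l<n. \<bar>xs l - x0 l\<bar>) \<le> (Delta k n C)\<^sup>2 * int n)"
    (is "\<exists>xs. _ \<and> (?tight xs \<or> ?steep xs \<or> _)")
proof -
  define B where "B = alpha m n Q A * int n * (Delta k n C)\<^sup>2"
  obtain x1 where opt: "optimal m k n Q A b C d x1" using has_opt by blast
  then have x1: "feasible m k n A b C d x1" unfolding optimal_def by simp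
  have A_y: "\<bar>mv n A (y i) j\<bar> \<le> B" if "i < r" "j < m" for i j
    unfolding B_def using abs_mv_le_alpha Y_bound that by blast
  have quad_y: "quad n Q (y i) \<le> int n ^ 2 * (Delta k n C) ^ 4 * alpha m n Q A" if "i < r" for i
  proof -
    have "\<bar>quad n Q (y i)\<bar> \<le> int n ^ 2 * ((Delta k n C)\<^sup>2)\<^sup>2 * alpha m n Q A"
      using abs_quad_le_alpha Y_bound that by blast
    then show ?thesis by (simp add: power_mult[symmetric])
  qed
  show ?thesis
  proof (cases "?tight x1 \<or> ?steep x1")
    case True
    with opt show ?thesis by blast
  next
    case False
    have slack: "mv n A x1 j + B < b j"
      if "j < m" "\<not> in_row_span k n C (\<lambda>l. of_int (A j l))" for j
      using False x1 that unfolding B_def feasible_def by force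
    have moves: "feasible m k n A b C d (\<lambda>l. x1 l + y i l) \<and>
        feasible m k n A b C d (\<lambda>l. x1 l - y i l)" if "i < r" for i
    proof -
      have "mv n A x1 j + \<bar>mv n A (y i) j\<bar> \<le> b j"
        if "j < m" "\<not> in_row_span k n C (\<lambda>l. of_int (A j l))" for j
        using slack[OF that] A_y[OF \<open>i < r\<close> \<open>j < m\<close>] by linarith
      then show ?thesis
        using feasible_add_diff_kernel_vector[OF x1 null_basis_kernel[OF Y_basis that]] by blast
    qed
    have "in_row_span k n C (\<lambda>l. of_int (\<Sum>t<n. y i t * Q t l))" if "i < r" for i
      using False optimal_abs_bilin_le_quad[OF Q_sym opt moves[OF that]] quad_y[OF that] that
      unfolding bilin_def by force
    then have all_optimal: "optimal m k n Q A b C d x" if "feasible m k n A b C d x" for x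
      using feasible_imp_optimal_if_flat[OF Q_sym Y_basis _ opt moves that] by blast
    show ?thesis
    proof (cases "feasible m k n A b C d x0")
      case True
      then show ?thesis using all_optimal by fastforce
    next
      case False
      then obtain xs j where "feasible m k n A b C d xs" "j < m" "b j - B \<le> mv n A xs j"
          "mv n A xs j \<le> b j" "\<not> in_row_span k n C (\<lambda>l. of_int (A j l))"
        using feasible_point_near_facet[OF Y_basis A_y x1 x0] by blast
      then show ?thesis using all_optimal unfolding B_def by blast
    qed
  qed
qed

end
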